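(* For $i=1,2$, let $G_i$ be an $m_i$-$\gamma_t$-critical graph of order $\Delta(G_i)+m_i$ with $\delta(G_i)\ge 2$, and let $v_i\in V(G_i)$ be a vertex of maximum degree $\Delta(G_i)$. Suppose that for each $i$, every connected component of the induced subgraph $G_i[V(G_i)\setminus N[v_i]]$ is isomorphic to the path $P_2$. Then the vertex amalgamation $G$ of $G_1$ and $G_2$ at $v_1$ and $v_2$ is an $(m_1+m_2-1)$-$\gamma_t$-critical graph of order $\Delta(G)+m_1+m_2-1$, where $\Delta(G)=\Delta(G_1)+\Delta(G_2)$.
   Context: All graphs are finite and simple. $N(x)$ is the neighborhood of $x$, $N[x]=N(x)\cup\{x\}$, $G[X]$ the subgraph induced by $X$, $P_k$ the path on $k$ vertices. A set $S\subseteq V(G)$ is a total dominating set if every vertex of $G$ is adjacent to some vertex of $S$; $\gamma_t(G)$ is the minimum size of such a set. A leaf is a vertex of degree one. A graph $G$ with no isolated vertex is $\gamma_t$-critical if for every vertex $v$ not adjacent to a leaf, $\gamma_t(G-v)<\gamma_t(G)$; it is $m$-$\gamma_t$-critical if moreover $\gamma_t(G)=m$. The vertex amalgamation of $G_1$ and $G_2$ at $v_1\in V(G_1)$, $v_2\in V(G_2)$ is the graph with vertex set $(V(G_1)\setminus\{v_1\})\cup(V(G_2)\setminus\{v_2\})\cup\{v\}$ ($v$ a new vertex, the vertex sets of $G_1,G_2$ disjoint) and edge set $E(G_1-v_1)\cup E(G_2-v_2)\cup\{vu: v_1u\in E(G_1)\}\cup\{vw: v_2w\in E(G_2)\}$.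 *)

theory Defs
  imports Main "HOL-Library.Extended_Nat"
begin

definition graph :: "'a set \<Rightarrow> ('a \<Rightarrow> 'a \<Rightarrow> bool) \<Rightarrow> bool" where
  "graph V E \<longleftrightarrow> finite V \<and> (\<forall>x y. E x y \<longrightarrow> x \<in> V \<and> y \<in> V)
     \<and> (\<forall>x y. E x y \<longrightarrow> E y x) \<and> (\<forall>x. \<not> E x x)"

definition nbhd :: "'a set \<Rightarrow> ('a \<Rightarrow> 'a \<Rightarrow> bool) \<Rightarrow> 'a \<Rightarrow> 'a set" where
  "nbhd V E x = {y \<in> V. E x y}"

definition cnbhd :: "'a set \<Rightarrow> ('a \<Rightarrow> 'a \<Rightarrow> bool) \<Rightarrow> 'a \<Rightarrow> 'a set" where
  "cnbhd V E x = insert x (nbhd V E x)"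

definition deg :: "'a set \<Rightarrow> ('a \<Rightarrow> 'a \<Rightarrow> bool) \<Rightarrow> 'a \<Rightarrow> nat" where
  "deg V E x = card (nbhd V E x)"

definition max_deg :: "'a set \<Rightarrow> ('a \<Rightarrow> 'a \<Rightarrow> bool) \<Rightarrow> nat" where
  "max_deg V E = Max (deg V E ` V)"

definition min_deg :: "'a set \<Rightarrow> ('a \<Rightarrow> 'a \<Rightarrow> bool) \<Rightarrow> nat" where
  "min_deg V E = Min (deg V E ` V)"

definition is_leaf :: "'a set \<Rightarrow> ('a \<Rightarrow> 'a \<Rightarrow> bool) \<Rightarrow> 'a \<Rightarrow> bool" where
  "is_leaf V E x \<longleftrightarrow> x \<in> V \<and> deg V E x = 1"

definition no_isolated :: "'a set \<Rightarrow> ('a \<Rightarrow> 'a \<Rightarrow> bool) \<Rightarrow> bool" where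
  "no_isolated V E \<longleftrightarrow> (\<forall>x\<in>V. \<exists>y\<in>V. E x y)"

definition induced :: "('a \<Rightarrow> 'a \<Rightarrow> bool) \<Rightarrow> 'a set \<Rightarrow> 'a \<Rightarrow> 'a \<Rightarrow> bool" where
  "induced E X x y \<longleftrightarrow> x \<in> X \<and> y \<in> X \<and> E x y"

definition total_dom :: "'a set \<Rightarrow> ('a \<Rightarrow> 'a \<Rightarrow> bool) \<Rightarrow> 'a set \<Rightarrow> bool" where
  "total_dom V E S \<longleftrightarrow> S \<subseteq> V \<and> (\<forall>x\<in>V. \<exists>y\<in>S. E x y)"

text \<open>Total domination number, as an extended natural (infinity if no total dominating set exists,
  i.e. if the graph has an isolated vertex).\<close>
definition gamma_t :: "'a set \<Rightarrow> ('a \<Rightarrow> 'a \<Rightarrow> bool) \<Rightarrow> enat" where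
  "gamma_t V E = Inf {enat (card S) | S. total_dom V E S}"

definition gamma_t_critical :: "'a set \<Rightarrow> ('a \<Rightarrow> 'a \<Rightarrow> bool) \<Rightarrow> bool" where
  "gamma_t_critical V E \<longleftrightarrow> no_isolated V E \<and>
     (\<forall>v\<in>V. \<not> (\<exists>u. is_leaf V E u \<and> E v u) \<longrightarrow>
        gamma_t (V - {v}) (induced E (V - {v})) < gamma_t V E)"

definition m_gamma_t_critical :: "nat \<Rightarrow> 'a set \<Rightarrow> ('a \<Rightarrow> 'a \<Rightarrow> bool) \<Rightarrow> bool" where
  "m_gamma_t_critical m V E \<longleftrightarrow> gamma_t_critical V E \<and> gamma_t V E = enat m"

definition components :: "'a set \<Rightarrow> ('a \<Rightarrow> 'a \<Rightarrow> bool) \<Rightarrow> 'a set set" where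
  "components V E = (\<lambda>x. {y \<in> V. (induced E V)\<^sup>*\<^sup>* x y}) ` V"

definition iso_path :: "'a set \<Rightarrow> ('a \<Rightarrow> 'a \<Rightarrow> bool) \<Rightarrow> nat \<Rightarrow> bool" where
  "iso_path C E k \<longleftrightarrow> (\<exists>f. bij_betw f {0..<k} C \<and>
      (\<forall>i<k. \<forall>j<k. E (f i) (f j) \<longleftrightarrow> (i + 1 = j \<or> j + 1 = i)))"

text \<open>Vertex amalgamation of (V1,E1) at v1 and (V2,E2) at v2. The vertex sets are made disjoint
  via the sum type; the new vertex v is None.\<close>
definition amal_V :: "'a set \<Rightarrow> 'a \<Rightarrow> 'b set \<Rightarrow> 'b \<Rightarrow> ('a + 'b) option set" where
  "amal_V V1 v1 V2 v2 = insert None (Some ` (Inl ` (V1 - {v1}) \<union> Inr ` (V2 - {v2})))"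

fun amal_E0 :: "('a \<Rightarrow> 'a \<Rightarrow> bool) \<Rightarrow> 'a \<Rightarrow> ('b \<Rightarrow> 'b \<Rightarrow> bool) \<Rightarrow> 'b
    \<Rightarrow> ('a + 'b) option \<Rightarrow> ('a + 'b) option \<Rightarrow> bool" where
  "amal_E0 E1 v1 E2 v2 (Some (Inl a)) (Some (Inl b)) = E1 a b"
| "amal_E0 E1 v1 E2 v2 (Some (Inr a)) (Some (Inr b)) = E2 a b"
| "amal_E0 E1 v1 E2 v2 None (Some (Inl b)) = E1 v1 b"
| "amal_E0 E1 v1 E2 v2 None (Some (Inr b)) = E2 v2 b"
| "amal_E0 E1 v1 E2 v2 (Some (Inl a)) None = E1 a v1"
| "amal_E0 E1 v1 E2 v2 (Some (Inr a)) None = E2 a v2"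
| "amal_E0 E1 v1 E2 v2 _ _ = False"

definition amal_E :: "'a set \<Rightarrow> ('a \<Rightarrow> 'a \<Rightarrow> bool) \<Rightarrow> 'a \<Rightarrow> 'b set \<Rightarrow> ('b \<Rightarrow> 'b \<Rightarrow> bool) \<Rightarrow> 'b
    \<Rightarrow> ('a + 'b) option \<Rightarrow> ('a + 'b) option \<Rightarrow> bool" where
  "amal_E V1 E1 v1 V2 E2 v2 x y \<longleftrightarrow> x \<in> amal_V V1 v1 V2 v2 \<and> y \<in> amal_V V1 v1 V2 v2
     \<and> amal_E0 E1 v1 E2 v2 x y"

end

theory Submission
  imports Defs
begin

text \<open>
  Let \<open>G\<^sub>i\<close> (\<open>i = 1, 2\<close>) be \<open>m\<^sub>i\<close>-\<open>\<gamma>\<^sub>t\<close>-critical of order \<open>\<Delta>(G\<^sub>i) + m\<^sub>i\<close> with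
  \<open>\<delta>(G\<^sub>i) \<ge> 2\<close>, glued at vertices \<open>v\<^sub>i\<close> of maximum degree whose non-neighbours
  \<open>R\<^sub>i = V\<^sub>i - N[v\<^sub>i]\<close> induce a perfect matching; note \<open>|R\<^sub>i| = m\<^sub>i - 1\<close>.

  One side at a time (locale \<open>critical_factor\<close>) we show: every vertex of \<open>R\<close> has a
  neighbour in \<open>N(v)\<close>, so choosing such neighbours gives \<open>D \<subseteq> N(v)\<close>, \<open>|D| \<le> m - 1\<close>,
  with \<open>D \<union> {v}\<close> totally dominating (upper bound); and any set dominating all vertices
  except possibly \<open>v\<close> has at least \<open>m - 1\<close> vertices besides \<open>v\<close>, since it either meets
  \<open>N(v)\<close> (and is then a total dominating set) or contains all of \<open>R\<close> (lower bound). Together this yields \<open>\<gamma>\<^sub>t = m\<^sub>1 + m\<^sub>2 - 1\<close>; criticality follows by deleting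
  the corresponding vertex on each side, and the degree and order statements by counting.
\<close>

definition dominates :: "('a \<Rightarrow> 'a \<Rightarrow> bool) \<Rightarrow> 'a set \<Rightarrow> 'a set \<Rightarrow> bool" where
  "dominates E T A \<longleftrightarrow> (\<forall>a\<in>A. \<exists>t\<in>T. E a t)"

lemma total_dom_iff: "total_dom V E S \<longleftrightarrow> S \<subseteq> V \<and> dominates E S V"
  by (simp add: total_dom_def dominates_def)

lemma total_dom_induced:
  assumes "T \<subseteq> X"
  shows "total_dom X (induced E X) T \<longleftrightarrow> dominates E T X"
  using assms unfolding total_dom_def dominates_def induced_def by blast

lemma gamma_t_le: "total_dom V E S \<Longrightarrow> gamma_t V E \<le> enat (card S)"
  unfolding gamma_t_def by (auto intro: Inf_lower)

lemma gamma_t_less_witness: "gamma_t V E < enat k \<Longrightarrow> \<exists>S. total_dom V E S \<and> card S < k"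
  unfolding gamma_t_def by (auto simp: Inf_less_iff)

lemma gamma_t_lower_card: "gamma_t V E = enat m \<Longrightarrow> total_dom V E S \<Longrightarrow> m \<le> card S"
  using gamma_t_le[of V E S] by simp

lemma gamma_t_eqI:
  assumes "total_dom V E S" "card S \<le> k" "\<And>S. total_dom V E S \<Longrightarrow> k \<le> card S"
  shows "gamma_t V E = enat k"
  unfolding gamma_t_def
  by (rule antisym) (use assms in \<open>auto intro!: Inf_greatest intro: Inf_lower2[of "enat (card S)"]\<close>)

locale fin_graph =
  fixes V :: "'a set" and E :: "'a \<Rightarrow> 'a \<Rightarrow> bool"
  assumes graph: "graph V E"
begin

lemma finite_V: "finite V" and adj_in_V: "E x y \<Longrightarrow> x \<in> V \<and> y \<in> V"
  and adj_sym: "E x y \<Longrightarrow> E y x" and adj_irrefl: "\<not> E x x"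
  using graph unfolding graph_def by blast+

lemma deg_le_max_deg: "x \<in> V \<Longrightarrow> deg V E x \<le> max_deg V E"
  unfolding max_deg_def using finite_V by auto

text \<open>A total dominating set contains a vertex together with one of its neighbours.\<close>
lemma total_dom_card_ge_2:
  assumes "total_dom V E S" "x \<in> V"
  shows "2 \<le> card S"
proof -
  obtain y where y: "y \<in> S" "E x y" using assms unfolding total_dom_def by blast
  then obtain z where z: "z \<in> S" "E y z" using assms adj_in_V unfolding total_dom_def by blast
  have "finite S" using assms(1) finite_V unfolding total_dom_def by (meson finite_subset)
  moreover have "y \<noteq> z" using z(2) adj_irrefl by auto
  ultimately have "card {y, z} \<le> card S" using y(1) z(1) by (intro card_mono) auto
  then show ?thesis using \<open>y \<noteq> z\<close> by simp
qed

end

locale critical_factor = fin_graph V E for V :: "'a set" and E +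
  fixes v :: 'a and m :: nat
  assumes critical: "m_gamma_t_critical m V E"
    and order: "card V = max_deg V E + m"
    and min_deg_2: "min_deg V E \<ge> 2"
    and hub: "v \<in> V" and hub_max_deg: "deg V E v = max_deg V E"
    and P2_components: "\<forall>C \<in> components (V - cnbhd V E v) (induced E (V - cnbhd V E v)).
      iso_path C E 2"
begin

abbreviation R :: "'a set" where "R \<equiv> V - cnbhd V E v"

lemma deg_ge_2: "x \<in> V \<Longrightarrow> 2 \<le> deg V E x"
  using min_deg_2 finite_V unfolding min_deg_def by (meson Min_le finite_imageI image_eqI le_trans)

lemma gamma_t_eq: "gamma_t V E = enat m"
  using critical unfolding m_gamma_t_critical_def by simp

text \<open>Since there are no leaves, criticality applies to every vertex: deleting any \<open>z\<close>
  leaves a graph totally dominated by fewer than \<open>m\<close> vertices.\<close>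
lemma vertex_deletion:
  assumes "z \<in> V"
  shows "\<exists>T \<subseteq> V - {z}. card T < m \<and> dominates E T (V - {z})"
proof -
  have "\<not> is_leaf V E u" for u using deg_ge_2 unfolding is_leaf_def by fastforce
  then have "gamma_t (V - {z}) (induced E (V - {z})) < enat m"
    using critical assms unfolding m_gamma_t_critical_def gamma_t_critical_def by auto
  then obtain T where "total_dom (V - {z}) (induced E (V - {z})) T" "card T < m"
    using gamma_t_less_witness by blast
  then show ?thesis using total_dom_induced[of T "V - {z}" E] by (auto simp: total_dom_def)
qed

lemma m_ge_2: "2 \<le> m"
proof -
  have "enat 2 \<le> gamma_t V E"
    unfolding gamma_t_def using total_dom_card_ge_2[OF _ hub] by (auto intro!: Inf_greatest)
  then show ?thesis using gamma_t_eq by simp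
qed

text \<open>The order condition \<open>|V| = \<Delta> + m\<close> says exactly that \<open>|R| = m - 1\<close>.\<close>
lemma card_R: "card R = m - 1"
proof -
  have "v \<notin> nbhd V E v" using adj_irrefl unfolding nbhd_def by simp
  then have "card (cnbhd V E v) = max_deg V E + 1"
    using hub_max_deg finite_V unfolding cnbhd_def deg_def nbhd_def by simp
  moreover have "cnbhd V E v \<subseteq> V" using hub unfolding cnbhd_def nbhd_def by auto
  ultimately show ?thesis using order finite_V by (simp add: card_Diff_subset finite_subset)
qed

definition comp :: "'a \<Rightarrow> 'a set" where
  "comp r = {y \<in> R. (induced (induced E R) R)\<^sup>*\<^sup>* r y}"

lemma comp_is_edge:
  assumes "r \<in> R"
  shows "\<exists>a b. comp r = {a, b} \<and> E a b"
proof -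
  have "comp r \<in> components R (induced E R)"
    unfolding components_def comp_def using assms by blast
  then obtain f where f: "bij_betw f {0..<2::nat} (comp r)"
     "\<forall>i<2::nat. \<forall>j<2::nat. E (f i) (f j) \<longleftrightarrow> (i + 1 = j \<or> j + 1 = i)"
    using P2_components unfolding iso_path_def by blast
  have "{0..<2::nat} = {0, 1}" by auto
  then have "comp r = {f 0, f 1}" using f(1) by (simp add: bij_betw_def)
  moreover have "E (f 0) (f 1)" using f(2) by auto
  ultimately show ?thesis by auto
qed

lemma comp_contains: "r \<in> R \<Longrightarrow> r \<in> comp r" and comp_subset: "comp r \<subseteq> R"
  and comp_adj: "y \<in> R \<Longrightarrow> r \<in> R \<Longrightarrow> E y r \<Longrightarrow> r \<in> comp y"
  unfolding comp_def by (auto simp: induced_def)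

lemma R_partner: assumes "r \<in> R" shows "\<exists>y\<in>R. E r y"
proof -
  obtain a b where ab: "comp r = {a, b}" "E a b" using comp_is_edge assms by blast
  then have "a \<in> R" "b \<in> R" "r = a \<or> r = b" using comp_subset comp_contains[OF assms] by auto
  then show ?thesis using ab(2) adj_sym by blast
qed

lemma R_partner_unique:
  assumes "y \<in> R" "r \<in> R" "z \<in> R" "E y r" "E y z"
  shows "r = z"
proof -
  obtain a b where ab: "comp y = {a, b}" "E a b" using comp_is_edge assms by blast
  have "r \<in> comp y" "z \<in> comp y" "y \<in> comp y" using comp_adj comp_contains assms by auto
  moreover have "r \<noteq> y" "z \<noteq> y" using assms adj_irrefl by auto
  ultimately show ?thesis using ab(1) by auto
qed

text \<open>Since \<open>\<delta> \<ge> 2\<close> and a vertex of \<open>R\<close> has only one neighbour in \<open>R\<close>,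
  it has a neighbour in \<open>N(v)\<close>.\<close>
lemma R_hub_neighbour:
  assumes "r \<in> R"
  shows "\<exists>u. E v u \<and> E r u"
proof (rule ccontr)
  assume none: "\<nexists>u. E v u \<and> E r u"
  obtain y where y: "y \<in> R" "E r y" using R_partner assms by blast
  have "nbhd V E r \<subseteq> {y}"
  proof
    fix z assume "z \<in> nbhd V E r"
    then have z: "z \<in> V" "E r z" unfolding nbhd_def by auto
    have "z \<in> R" using z none assms adj_sym unfolding cnbhd_def nbhd_def by auto
    then show "z \<in> {y}" using R_partner_unique[of r y z] assms y z by simp
  qed
  then have "card (nbhd V E r) \<le> 1" using card_mono[of "{y}"] by fastforce
  then show False using deg_ge_2[of r] assms unfolding deg_def by simp
qed

text \<open>If \<open>X\<close> meets \<open>N(v)\<close> it is a total dominating set;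
  otherwise it must contain all of \<open>R\<close>, which has \<open>m - 1\<close> vertices.\<close>
lemma almost_dom_card:
  assumes X: "X \<subseteq> V" and dom: "dominates E X (V - {v})"
  shows "m - 1 \<le> card (X - {v})"
proof (cases "\<exists>x\<in>X. E v x")
  case True
  then have "total_dom V E X" using X dom unfolding total_dom_def dominates_def by blast
  then have "m \<le> card X" by (rule gamma_t_lower_card[OF gamma_t_eq])
  then have "m - 1 \<le> card X - card {v}" using diff_le_mono[of m "card X" 1] by simp
  also have "\<dots> \<le> card (X - {v})" using diff_card_le_card_Diff[of "{v}" X] by simp
  finally show ?thesis .
next
  case False
  have in_R: "x \<in> R" if "x \<in> X" "E y x" "\<not> E y v" for x y
  proof -
    have "x \<noteq> v" "\<not> E v x" using that False by auto
    then show ?thesis using that(1) X unfolding cnbhd_def nbhd_def by auto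
  qed
  have "R \<subseteq> X - {v}"
  proof
    fix r assume r: "r \<in> R"
    obtain x where x: "x \<in> X" "E r x" using dom r unfolding dominates_def cnbhd_def by blast
    have "\<not> E r v" using r adj_sym unfolding cnbhd_def nbhd_def by blast
    then have xR: "x \<in> R" using in_R x by blast
    obtain y where y: "y \<in> X" "E x y" using dom xR unfolding dominates_def cnbhd_def by blast
    have "\<not> E x v" using xR adj_sym unfolding cnbhd_def nbhd_def by blast
    then have yR: "y \<in> R" using in_R y by blast
    have "r = y" using R_partner_unique[of x r y] x y r xR yR adj_sym by blast
    then show "r \<in> X - {v}" using y yR by (auto simp: cnbhd_def)
  qed
  then have "card R \<le> card (X - {v})" using finite_subset[OF X finite_V] by (intro card_mono) auto
  then show ?thesis using card_R by simp
qed

text \<open>Upper bound: picking for each vertex of \<open>R\<close> a common neighbour with \<open>v\<close> gives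
  \<open>D \<subseteq> N(v)\<close> with \<open>|D| \<le> m - 1\<close> such that \<open>D \<union> {v}\<close> totally dominates \<open>G\<close>.\<close>
lemma hub_dom_set: "\<exists>D \<subseteq> nbhd V E v. card D \<le> m - 1 \<and> total_dom V E (insert v D)"
proof -
  define f where "f r = (SOME u. E v u \<and> E r u)" for r
  have f: "E v (f r) \<and> E r (f r)" if "r \<in> R" for r
    unfolding f_def using R_hub_neighbour[OF that] by (rule someI_ex)
  have "R \<noteq> {}" using card_R m_ge_2 by (intro notI) simp
  then have "\<exists>d\<in>f ` R. E v d" using f by blast
  moreover have "f ` R \<subseteq> nbhd V E v" using f adj_in_V unfolding nbhd_def by blast
  moreover have "card (f ` R) \<le> m - 1" using card_image_le[of R f] finite_V card_R by simp
  moreover have "\<exists>d\<in>insert v (f ` R). E x d" if "x \<in> V" "x \<noteq> v" for x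
  proof (cases "x \<in> R")
    case True
    then show ?thesis using f by blast
  next
    case False
    then show ?thesis using that adj_sym unfolding cnbhd_def nbhd_def by auto
  qed
  ultimately show ?thesis using hub unfolding total_dom_def nbhd_def by (intro exI[of _ "f ` R"]) auto
qed

end

definition emb1 :: "'a \<Rightarrow> 'a \<Rightarrow> ('a + 'b) option" where
  "emb1 v1 a = (if a = v1 then None else Some (Inl a))"

definition emb2 :: "'b \<Rightarrow> 'b \<Rightarrow> ('a + 'b) option" where
  "emb2 v2 b = (if b = v2 then None else Some (Inr b))"

lemma emb1_simps [simp]: "emb1 v1 v1 = None" "a \<noteq> v1 \<Longrightarrow> emb1 v1 a = Some (Inl a)"
  and emb2_simps [simp]: "emb2 v2 v2 = None" "b \<noteq> v2 \<Longrightarrow> emb2 v2 b = Some (Inr b)"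
  by (simp_all add: emb1_def emb2_def)

lemma emb1_eq_emb2_iff: "emb1 v1 a = emb2 v2 b \<longleftrightarrow> a = v1 \<and> b = v2"
  by (simp add: emb1_def emb2_def)

lemma inj_emb1: "inj (emb1 v1)" and inj_emb2: "inj (emb2 v2)"
  by (auto simp: inj_def emb1_def emb2_def split: if_splits)

lemma amal_V_simps [simp]:
  "None \<in> amal_V V1 v1 V2 v2"
  "Some (Inl a) \<in> amal_V V1 v1 V2 v2 \<longleftrightarrow> a \<in> V1 \<and> a \<noteq> v1"
  "Some (Inr b) \<in> amal_V V1 v1 V2 v2 \<longleftrightarrow> b \<in> V2 \<and> b \<noteq> v2"
  by (auto simp: amal_V_def)

lemma amal_E_simps [simp]:
  "amal_E V1 E1 v1 V2 E2 v2 (Some (Inl a)) (Some (Inr b)) = False"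
  "amal_E V1 E1 v1 V2 E2 v2 (Some (Inr b)) (Some (Inl a)) = False"
  "amal_E V1 E1 v1 V2 E2 v2 None None = False"
  "amal_E V1 E1 v1 V2 E2 v2 None (Some (Inl a)) \<longleftrightarrow> a \<in> V1 \<and> a \<noteq> v1 \<and> E1 v1 a"
  "amal_E V1 E1 v1 V2 E2 v2 None (Some (Inr b)) \<longleftrightarrow> b \<in> V2 \<and> b \<noteq> v2 \<and> E2 v2 b"
  "amal_E V1 E1 v1 V2 E2 v2 (Some (Inl a)) None \<longleftrightarrow> a \<in> V1 \<and> a \<noteq> v1 \<and> E1 a v1"
  "amal_E V1 E1 v1 V2 E2 v2 (Some (Inr b)) None \<longleftrightarrow> b \<in> V2 \<and> b \<noteq> v2 \<and> E2 b v2"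
  "amal_E V1 E1 v1 V2 E2 v2 (Some (Inl a)) (Some (Inl a')) \<longleftrightarrow>
     a \<in> V1 \<and> a \<noteq> v1 \<and> a' \<in> V1 \<and> a' \<noteq> v1 \<and> E1 a a'"
  "amal_E V1 E1 v1 V2 E2 v2 (Some (Inr b)) (Some (Inr b')) \<longleftrightarrow>
     b \<in> V2 \<and> b \<noteq> v2 \<and> b' \<in> V2 \<and> b' \<noteq> v2 \<and> E2 b b'"
  by (auto simp: amal_E_def)

lemma amal_vertex_cases:
  obtains "x = None" | a where "x = Some (Inl a)" | b where "x = Some (Inr b)"
  by (metis option.exhaust sum.exhaust)

locale amalgam = g1: fin_graph V1 E1 + g2: fin_graph V2 E2
  for V1 :: "'a set" and E1 and V2 :: "'b set" and E2 +
  fixes v1 :: 'a and v2 :: 'b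
  assumes v1: "v1 \<in> V1" and v2: "v2 \<in> V2"
begin

abbreviation W :: "('a + 'b) option set" where "W \<equiv> amal_V V1 v1 V2 v2"
abbreviation F where "F \<equiv> amal_E V1 E1 v1 V2 E2 v2"
abbreviation in1 :: "'a \<Rightarrow> ('a + 'b) option" where "in1 \<equiv> emb1 v1"
abbreviation in2 :: "'b \<Rightarrow> ('a + 'b) option" where "in2 \<equiv> emb2 v2"

lemma W_eq: "W = in1 ` V1 \<union> in2 ` V2"
proof (rule set_eqI)
  fix x show "x \<in> W \<longleftrightarrow> x \<in> in1 ` V1 \<union> in2 ` V2"
    using v1 by (cases x rule: amal_vertex_cases) (auto simp: emb1_def emb2_def image_iff)
qed

lemma in1_in_W: "in1 a \<in> W \<longleftrightarrow> a \<in> V1" and in2_in_W: "in2 b \<in> W \<longleftrightarrow> b \<in> V2"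
  using v1 v2 by (auto simp: emb1_def emb2_def)

lemma card_in1: "card (in1 ` A) = card A" and card_in2: "card (in2 ` B) = card B"
  by (rule card_image[OF inj_on_subset[OF inj_emb1 subset_UNIV]],
      rule card_image[OF inj_on_subset[OF inj_emb2 subset_UNIV]])

lemma card_W: "card W = card V1 + card V2 - 1"
proof -
  have "in1 ` V1 \<inter> in2 ` V2 = {None}" using v1 v2 by (auto simp: emb1_def emb2_def)
  then have "card W + 1 = card (in1 ` V1) + card (in2 ` V2)"
    using card_Un_Int[of "in1 ` V1" "in2 ` V2"] g1.finite_V g2.finite_V by (simp add: W_eq)
  then show ?thesis by (simp add: card_in1 card_in2)
qed

lemma adj_in1: "a \<in> V1 \<Longrightarrow> b \<in> V1 \<Longrightarrow> F (in1 a) (in1 b) \<longleftrightarrow> E1 a b"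
  and adj_in2: "c \<in> V2 \<Longrightarrow> d \<in> V2 \<Longrightarrow> F (in2 c) (in2 d) \<longleftrightarrow> E2 c d"
  using g1.adj_irrefl g2.adj_irrefl by (auto simp: emb1_def emb2_def)

lemma graph_W: "graph W F"
proof -
  have "finite W" using g1.finite_V g2.finite_V by (simp add: W_eq)
  moreover have "F x y \<Longrightarrow> x \<in> W \<and> y \<in> W" for x y by (simp add: amal_E_def)
  moreover have "F x y \<Longrightarrow> F y x" for x y using g1.adj_sym g2.adj_sym
    by (cases x rule: amal_vertex_cases; cases y rule: amal_vertex_cases) auto
  moreover have "\<not> F x x" for x using g1.adj_irrefl g2.adj_irrefl
    by (cases x rule: amal_vertex_cases) auto
  ultimately show ?thesis unfolding graph_def by blast
qed

lemma nbhd_None: "nbhd W F None = in1 ` nbhd V1 E1 v1 \<union> in2 ` nbhd V2 E2 v2"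
proof (rule set_eqI)
  fix x show "x \<in> nbhd W F None \<longleftrightarrow> x \<in> in1 ` nbhd V1 E1 v1 \<union> in2 ` nbhd V2 E2 v2"
    using g1.adj_irrefl g2.adj_irrefl
    by (cases x rule: amal_vertex_cases) (auto simp: nbhd_def emb1_def emb2_def image_iff)
qed

lemma nbhd_in1:
  assumes "a \<in> V1" "a \<noteq> v1"
  shows "nbhd W F (in1 a) = in1 ` nbhd V1 E1 a"
proof (rule set_eqI)
  fix x show "x \<in> nbhd W F (in1 a) \<longleftrightarrow> x \<in> in1 ` nbhd V1 E1 a"
    using assms v1 g1.adj_in_V
    by (cases x rule: amal_vertex_cases) (auto simp: nbhd_def emb1_def image_iff)
qed

lemma nbhd_in2:
  assumes "b \<in> V2" "b \<noteq> v2"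
  shows "nbhd W F (in2 b) = in2 ` nbhd V2 E2 b"
proof (rule set_eqI)
  fix x show "x \<in> nbhd W F (in2 b) \<longleftrightarrow> x \<in> in2 ` nbhd V2 E2 b"
    using assms v2 g2.adj_in_V
    by (cases x rule: amal_vertex_cases) (auto simp: nbhd_def emb2_def image_iff)
qed

text \<open>The glued vertex has degree \<open>\<Delta>(G\<^sub>1) + \<Delta>(G\<^sub>2)\<close> when \<open>v\<^sub>1, v\<^sub>2\<close> have maximum
  degree, and every other vertex keeps its degree, so this is the maximum degree.\<close>
lemma max_deg_W:
  assumes "deg V1 E1 v1 = max_deg V1 E1" "deg V2 E2 v2 = max_deg V2 E2"
  shows "max_deg W F = max_deg V1 E1 + max_deg V2 E2"
proof -
  have "finite (nbhd V1 E1 v1)" "finite (nbhd V2 E2 v2)"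
    using g1.finite_V g2.finite_V by (simp_all add: nbhd_def)
  moreover have "in1 ` nbhd V1 E1 v1 \<inter> in2 ` nbhd V2 E2 v2 = {}"
    using g1.adj_irrefl g2.adj_irrefl by (auto simp: nbhd_def emb1_def emb2_def)
  ultimately have deg_None: "deg W F None = max_deg V1 E1 + max_deg V2 E2"
    using assms by (simp add: deg_def nbhd_None card_Un_disjoint card_in1 card_in2)
  have "deg W F x \<le> max_deg V1 E1 + max_deg V2 E2" if x: "x \<in> W" for x
  proof -
    consider "x = None" | a where "a \<in> V1" "a \<noteq> v1" "x = in1 a"
      | b where "b \<in> V2" "b \<noteq> v2" "x = in2 b"
      using x by (cases x rule: amal_vertex_cases) auto
    then show ?thesis
    proof cases
      case 1
      then show ?thesis using deg_None by simp
    next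
      case (2 a)
      then have "deg W F x = deg V1 E1 a"
        using nbhd_in1[OF 2(1,2)] by (simp add: deg_def card_in1)
      then show ?thesis using g1.deg_le_max_deg[OF 2(1)] by simp
    next
      case (3 b)
      then have "deg W F x = deg V2 E2 b"
        using nbhd_in2[OF 3(1,2)] by (simp add: deg_def card_in2)
      then show ?thesis using g2.deg_le_max_deg[OF 3(1)] by simp
    qed
  qed
  then show ?thesis unfolding max_deg_def[of W F] using graph_W deg_None
    by (intro Max_eqI) (auto simp: graph_def intro: rev_image_eqI[of None])
qed

lemma dominates_combine:
  assumes "T1 \<subseteq> V1" "A1 \<subseteq> V1" "dominates E1 T1 A1"
    and "T2 \<subseteq> V2" "A2 \<subseteq> V2" "dominates E2 T2 A2"
  shows "dominates F (in1 ` T1 \<union> in2 ` T2) (in1 ` A1 \<union> in2 ` A2)"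
  unfolding dominates_def
proof
  fix x assume "x \<in> in1 ` A1 \<union> in2 ` A2"
  then consider a where "a \<in> A1" "x = in1 a" | b where "b \<in> A2" "x = in2 b" by blast
  then show "\<exists>t\<in>in1 ` T1 \<union> in2 ` T2. F x t"
  proof cases
    case 1
    then obtain t where "t \<in> T1" "E1 a t" using assms(3) unfolding dominates_def by blast
    then show ?thesis using 1 assms(1,2) adj_in1[of a t] by blast
  next
    case 2
    then obtain t where "t \<in> T2" "E2 b t" using assms(6) unfolding dominates_def by blast
    then show ?thesis using 2 assms(4,5) adj_in2[of b t] by blast
  qed
qed

lemma dominates_restrict1:
  assumes "dominates F S W"
  shows "dominates E1 (in1 -` S) (V1 - {v1})"
  unfolding dominates_def
proof
  fix a assume a: "a \<in> V1 - {v1}"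
  then obtain s where s: "s \<in> S" "F (in1 a) s"
    using assms in1_in_W unfolding dominates_def by blast
  then have "s \<in> nbhd W F (in1 a)" by (simp add: nbhd_def amal_E_def)
  then obtain t where "s = in1 t" "E1 a t" using a nbhd_in1[of a] by (auto simp: nbhd_def)
  then show "\<exists>t\<in>in1 -` S. E1 a t" using s(1) by blast
qed

lemma dominates_restrict2:
  assumes "dominates F S W"
  shows "dominates E2 (in2 -` S) (V2 - {v2})"
  unfolding dominates_def
proof
  fix b assume b: "b \<in> V2 - {v2}"
  then obtain s where s: "s \<in> S" "F (in2 b) s"
    using assms in2_in_W unfolding dominates_def by blast
  then have "s \<in> nbhd W F (in2 b)" by (simp add: nbhd_def amal_E_def)
  then obtain t where "s = in2 t" "E2 b t" using b nbhd_in2[of b] by (auto simp: nbhd_def)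
  then show "\<exists>t\<in>in2 -` S. E2 b t" using s(1) by blast
qed

lemma dominates_glued:
  assumes "dominates F S W"
  shows "(\<exists>t\<in>in1 -` S. E1 v1 t) \<or> (\<exists>t\<in>in2 -` S. E2 v2 t)"
proof -
  obtain s where "s \<in> S" "F None s"
    using assms amal_V_simps(1)[of V1 v1 V2 v2] unfolding dominates_def by blast
  then have "s \<in> nbhd W F None" by (auto simp: nbhd_def amal_E_def)
  then have "s \<in> in1 ` nbhd V1 E1 v1 \<union> in2 ` nbhd V2 E2 v2" by (simp only: nbhd_None)
  then show ?thesis using \<open>s \<in> S\<close> unfolding nbhd_def by blast
qed

text \<open>A vertex set \<open>S\<close> is counted by its two preimages, which share only the glued vertex.\<close>
lemma card_preimages:
  assumes "S \<subseteq> W"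
  shows "card S + card (S \<inter> {None}) = card (in1 -` S) + card (in2 -` S)"
proof -
  define X1 where "X1 = in1 -` S"
  define X2 where "X2 = in2 -` S"
  have S: "S = in1 ` X1 \<union> in2 ` X2" using assms unfolding X1_def X2_def by (auto simp: W_eq)
  have "X1 \<subseteq> V1" "X2 \<subseteq> V2" using assms in1_in_W in2_in_W unfolding X1_def X2_def by auto
  then have fin: "finite (in1 ` X1)" "finite (in2 ` X2)"
    using g1.finite_V g2.finite_V by (auto intro: finite_subset)
  have "in1 ` X1 \<inter> in2 ` X2 = S \<inter> {None}"
  proof
    show "in1 ` X1 \<inter> in2 ` X2 \<subseteq> S \<inter> {None}"
      using S by (auto simp: emb1_eq_emb2_iff)
    show "S \<inter> {None} \<subseteq> in1 ` X1 \<inter> in2 ` X2"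
      unfolding X1_def X2_def by (auto intro: rev_image_eqI[of v1] rev_image_eqI[of v2])
  qed
  then have "card S + card (S \<inter> {None}) = card (in1 ` X1) + card (in2 ` X2)"
    using card_Un_Int[OF fin] S by simp
  then show ?thesis unfolding X1_def X2_def card_in1 card_in2 .
qed

text \<open>Deleting a vertex of the amalgamation amounts to deleting one vertex on each side
  (the glued vertex, if the deleted vertex lies on the other side).\<close>
lemma W_delete:
  assumes "x \<in> W"
  shows "\<exists>z1\<in>V1. \<exists>z2\<in>V2. W - {x} = in1 ` (V1 - {z1}) \<union> in2 ` (V2 - {z2})"
proof -
  have "\<exists>z1\<in>V1. \<exists>z2\<in>V2. in1 z1 = x \<and> in2 z2 = x \<or> in1 z1 = x \<and> z2 = v2 \<or> z1 = v1 \<and> in2 z2 = x"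
  proof (cases x rule: amal_vertex_cases)
    case 1
    then show ?thesis using v1 v2 by force
  next
    case (2 a)
    then show ?thesis using assms v2 by (intro bexI[of _ a] bexI[of _ v2]) auto
  next
    case (3 b)
    then show ?thesis using assms v1 by (intro bexI[of _ v1] bexI[of _ b]) auto
  qed
  then obtain z1 z2 where z: "z1 \<in> V1" "z2 \<in> V2"
    "in1 z1 = x \<and> in2 z2 = x \<or> in1 z1 = x \<and> z2 = v2 \<or> z1 = v1 \<and> in2 z2 = x" by blast
  have "W - {x} = in1 ` (V1 - {z1}) \<union> in2 ` (V2 - {z2})"
  proof (rule set_eqI)
    fix y show "y \<in> W - {x} \<longleftrightarrow> y \<in> in1 ` (V1 - {z1}) \<union> in2 ` (V2 - {z2})"
      using z v1 v2
      by (cases y rule: amal_vertex_cases) (auto simp: emb1_def emb2_def image_iff split: if_splits)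
  qed
  then show ?thesis using z by blast
qed

text \<open>Deleting any vertex \<open>x\<close>: deleting the corresponding vertices \<open>z\<^sub>1, z\<^sub>2\<close> on the two
  sides leaves graphs dominated by fewer than \<open>m\<^sub>1\<close> and \<open>m\<^sub>2\<close> vertices; the union of their
  images dominates the amalgamation minus \<open>x\<close> with at most \<open>m\<^sub>1 + m\<^sub>2 - 2\<close> vertices.\<close>
lemma gamma_t_delete:
  assumes del1: "\<forall>z\<in>V1. \<exists>T \<subseteq> V1 - {z}. card T < m1 \<and> dominates E1 T (V1 - {z})"
    and del2: "\<forall>z\<in>V2. \<exists>T \<subseteq> V2 - {z}. card T < m2 \<and> dominates E2 T (V2 - {z})"
    and x: "x \<in> W"
  shows "gamma_t (W - {x}) (induced F (W - {x})) < enat (m1 + m2 - 1)"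
proof -
  obtain z1 z2 where z: "z1 \<in> V1" "z2 \<in> V2"
    and W_x: "W - {x} = in1 ` (V1 - {z1}) \<union> in2 ` (V2 - {z2})"
    using W_delete[OF x] by blast
  obtain T1 where T1: "T1 \<subseteq> V1 - {z1}" "card T1 < m1" "dominates E1 T1 (V1 - {z1})"
    using del1 z(1) by blast
  obtain T2 where T2: "T2 \<subseteq> V2 - {z2}" "card T2 < m2" "dominates E2 T2 (V2 - {z2})"
    using del2 z(2) by blast
  let ?T = "in1 ` T1 \<union> in2 ` T2"
  have "?T \<subseteq> W - {x}" unfolding W_x using T1(1) T2(1) by (intro Un_mono image_mono)
  moreover have "dominates F ?T (W - {x})" unfolding W_x
    using T1(1,3) T2(1,3) by (intro dominates_combine) auto
  ultimately have "total_dom (W - {x}) (induced F (W - {x})) ?T" by (simp add: total_dom_induced)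
  then have "gamma_t (W - {x}) (induced F (W - {x})) \<le> enat (card ?T)" by (rule gamma_t_le)
  moreover have "card ?T \<le> card T1 + card T2"
    using card_Un_le[of "in1 ` T1" "in2 ` T2"] by (simp only: card_in1 card_in2)
  then have "enat (card ?T) < enat (m1 + m2 - 1)" using T1(2) T2(2) by simp
  ultimately show ?thesis by (rule order.strict_trans1)
qed

text \<open>The side that
  dominates the glued vertex contributes at least \<open>m\<^sub>i\<close>, the other at least \<open>m\<^sub>j - 1\<close>
  vertices besides \<open>v\<^sub>j\<close>; the glued vertex is counted on both sides.\<close>
lemma total_dom_card_lower:
  assumes f1: "critical_factor V1 E1 v1 m1" and f2: "critical_factor V2 E2 v2 m2"
    and S: "total_dom W F S"
  shows "m1 + m2 - 1 \<le> card S"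
proof -
  interpret f1: critical_factor V1 E1 v1 m1 by (rule f1)
  interpret f2: critical_factor V2 E2 v2 m2 by (rule f2)
  define X1 where "X1 = in1 -` S"
  define X2 where "X2 = in2 -` S"
  have SW: "S \<subseteq> W" and dom: "dominates F S W" using S by (simp_all add: total_dom_iff)
  have X: "X1 \<subseteq> V1" "X2 \<subseteq> V2" using SW in1_in_W in2_in_W unfolding X1_def X2_def by auto
  have dom1: "dominates E1 X1 (V1 - {v1})" and dom2: "dominates E2 X2 (V2 - {v2})"
    unfolding X1_def X2_def using dominates_restrict1[OF dom] dominates_restrict2[OF dom] .
  have count: "card S + card (S \<inter> {None}) = card X1 + card X2"
    unfolding X1_def X2_def by (rule card_preimages[OF SW])
  have glued: "v1 \<in> X1 \<longleftrightarrow> None \<in> S" "v2 \<in> X2 \<longleftrightarrow> None \<in> S" unfolding X1_def X2_def by simp_all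
  have fin: "finite X1" "finite X2" using X g1.finite_V g2.finite_V by (auto intro: finite_subset)
  have "card X1 = card (X1 - {v1}) + card (S \<inter> {None})"
    using glued(1) card.remove[OF fin(1), of v1] by (cases "None \<in> S") auto
  then have side1: "m1 - 1 + card (S \<inter> {None}) \<le> card X1"
    using f1.almost_dom_card[OF X(1) dom1] by linarith
  have "card X2 = card (X2 - {v2}) + card (S \<inter> {None})"
    using glued(2) card.remove[OF fin(2), of v2] by (cases "None \<in> S") auto
  then have side2: "m2 - 1 + card (S \<inter> {None}) \<le> card X2"
    using f2.almost_dom_card[OF X(2) dom2] by linarith
  consider (one) "\<exists>t\<in>X1. E1 v1 t" | (two) "\<exists>t\<in>X2. E2 v2 t"
    using dominates_glued[OF dom] unfolding X1_def X2_def by blast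
  then show ?thesis
  proof cases
    case one
    then have "total_dom V1 E1 X1" using X(1) dom1 unfolding total_dom_iff dominates_def by blast
    then have "m1 \<le> card X1" by (rule gamma_t_lower_card[OF f1.gamma_t_eq])
    then show ?thesis using count side2 by linarith
  next
    case two
    then have "total_dom V2 E2 X2" using X(2) dom2 unfolding total_dom_iff dominates_def by blast
    then have "m2 \<le> card X2" by (rule gamma_t_lower_card[OF f2.gamma_t_eq])
    then show ?thesis using count side1 by linarith
  qed
qed

text \<open>Upper bound: the dominating sets \<open>D\<^sub>i \<union> {v\<^sub>i}\<close> of the two sides share the glued
  vertex, giving a total dominating set of the amalgamation with \<open>m\<^sub>1 + m\<^sub>2 - 1\<close> vertices.\<close>
lemma total_dom_upper:
  assumes f1: "critical_factor V1 E1 v1 m1" and f2: "critical_factor V2 E2 v2 m2"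
  shows "\<exists>S. total_dom W F S \<and> card S \<le> m1 + m2 - 1"
proof -
  interpret f1: critical_factor V1 E1 v1 m1 by (rule f1)
  interpret f2: critical_factor V2 E2 v2 m2 by (rule f2)
  obtain D1 where D1: "card D1 \<le> m1 - 1" "total_dom V1 E1 (insert v1 D1)"
    using f1.hub_dom_set by blast
  obtain D2 where D2: "card D2 \<le> m2 - 1" "total_dom V2 E2 (insert v2 D2)"
    using f2.hub_dom_set by blast
  let ?S = "in1 ` insert v1 D1 \<union> in2 ` insert v2 D2"
  have sub: "insert v1 D1 \<subseteq> V1" "insert v2 D2 \<subseteq> V2" using D1(2) D2(2) by (simp_all add: total_dom_iff)
  have "?S \<subseteq> W" unfolding W_eq using sub by (intro Un_mono image_mono)
  moreover have "dominates F ?S W" unfolding W_eq using sub D1(2) D2(2)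
    by (intro dominates_combine) (simp_all add: total_dom_iff)
  ultimately have "total_dom W F ?S" by (simp add: total_dom_iff)
  moreover have "card (in1 ` D1 \<union> in2 ` D2) \<le> card D1 + card D2"
    using card_Un_le[of "in1 ` D1" "in2 ` D2"] by (simp only: card_in1 card_in2)
  then have "card (insert None (in1 ` D1 \<union> in2 ` D2)) \<le> Suc (card D1 + card D2)"
    by (intro card_insert_le_m1) simp_all
  then have "card ?S \<le> Suc (card D1 + card D2)" by simp
  then have "card ?S \<le> m1 + m2 - 1" using D1(1) D2(1) f1.m_ge_2 f2.m_ge_2 by linarith
  ultimately show ?thesis by blast
qed

lemma critical_W:
  assumes f1: "critical_factor V1 E1 v1 m1" and f2: "critical_factor V2 E2 v2 m2"
  shows "m_gamma_t_critical (m1 + m2 - 1) W F"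
proof -
  obtain S where S: "total_dom W F S" "card S \<le> m1 + m2 - 1"
    using total_dom_upper[OF f1 f2] by blast
  have gamma: "gamma_t W F = enat (m1 + m2 - 1)"
    using gamma_t_eqI[OF S] total_dom_card_lower[OF f1 f2] by blast
  have "no_isolated W F" using S(1) graph_W
    unfolding no_isolated_def total_dom_iff dominates_def graph_def by blast
  moreover have "gamma_t (W - {x}) (induced F (W - {x})) < gamma_t W F" if "x \<in> W" for x
    unfolding gamma using gamma_t_delete critical_factor.vertex_deletion[OF f1]
      critical_factor.vertex_deletion[OF f2] that by blast
  ultimately show ?thesis
    unfolding m_gamma_t_critical_def gamma_t_critical_def using gamma by blast
qed

end

theorem mainTheorem2:
  fixes V1 :: "'a set" and E1 :: "'a \<Rightarrow> 'a \<Rightarrow> bool" and v1 :: 'a and m1 :: nat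
    and V2 :: "'b set" and E2 :: "'b \<Rightarrow> 'b \<Rightarrow> bool" and v2 :: 'b and m2 :: nat
  assumes g1: "graph V1 E1" and g2: "graph V2 E2"
    and c1: "m_gamma_t_critical m1 V1 E1" and c2: "m_gamma_t_critical m2 V2 E2"
    and o1: "card V1 = max_deg V1 E1 + m1" and o2: "card V2 = max_deg V2 E2 + m2"
    and d1: "min_deg V1 E1 \<ge> 2" and d2: "min_deg V2 E2 \<ge> 2"
    and v1: "v1 \<in> V1" "deg V1 E1 v1 = max_deg V1 E1"
    and v2: "v2 \<in> V2" "deg V2 E2 v2 = max_deg V2 E2"
    and p1: "\<forall>C \<in> components (V1 - cnbhd V1 E1 v1) (induced E1 (V1 - cnbhd V1 E1 v1)).
               iso_path C E1 2"
    and p2: "\<forall>C \<in> components (V2 - cnbhd V2 E2 v2) (induced E2 (V2 - cnbhd V2 E2 v2)).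
               iso_path C E2 2"
  shows "graph (amal_V V1 v1 V2 v2) (amal_E V1 E1 v1 V2 E2 v2)
    \<and> m_gamma_t_critical (m1 + m2 - 1) (amal_V V1 v1 V2 v2) (amal_E V1 E1 v1 V2 E2 v2)
    \<and> max_deg (amal_V V1 v1 V2 v2) (amal_E V1 E1 v1 V2 E2 v2) = max_deg V1 E1 + max_deg V2 E2
    \<and> card (amal_V V1 v1 V2 v2)
        = max_deg (amal_V V1 v1 V2 v2) (amal_E V1 E1 v1 V2 E2 v2) + (m1 + m2 - 1)"
proof -
  interpret G: amalgam V1 E1 V2 E2 v1 v2
    using g1 g2 v1(1) v2(1) unfolding amalgam_def amalgam_axioms_def fin_graph_def by blast
  have f1: "critical_factor V1 E1 v1 m1"
    using g1 c1 o1 d1 v1 p1 unfolding critical_factor_def critical_factor_axioms_def fin_graph_def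
    by blast
  have f2: "critical_factor V2 E2 v2 m2"
    using g2 c2 o2 d2 v2 p2 unfolding critical_factor_def critical_factor_axioms_def fin_graph_def
    by blast
  have max_deg: "max_deg G.W G.F = max_deg V1 E1 + max_deg V2 E2"
    by (rule G.max_deg_W[OF v1(2) v2(2)])
  moreover have "card G.W = max_deg G.W G.F + (m1 + m2 - 1)"
    using G.card_W o1 o2 max_deg critical_factor.m_ge_2[OF f1] by linarith
  ultimately show ?thesis using G.graph_W G.critical_W[OF f1 f2] by blast
qed

end
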